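(* Let $k\ge r\ge3$ and $p,t\ge0$ be integers and let $\pi\in\mathbb{C}_{<}(k,r|p,t)$ be such that $\pi^{(2)}_p=2t+2$ and $\pi^{(2)}_p$ is of starting type $s_3$. Let $p_1$ be the smallest integer with $1\le p_1\le p$ such that $\pi^{(2)}_{p_1}=\pi^{(2)}_{p}+4(p-p_1)$ and $\pi^{(2)}_{p},\pi^{(2)}_{p-1},\dots,\pi^{(2)}_{p_1}$ are all of the same starting type. Then the integer $\pi^{(2)}_{p_1}+4$ occurs at most once as a part of $\pi$.
   Context: A partition $\pi=(\pi_1,\dots,\pi_\ell)$ is a finite non-increasing sequence of positive integers; "$a$ occurs in $\pi$" means $a=\pi_i$ for some $i$. Göllnitz–Gordon marking: $GG(\pi)$ assigns a positive integer (mark) to each part, processing the parts from smallest to largest; $\pi_i$ receives the smallest positive integer different from the marks of all parts $\pi_g$ with $g>i$ and $\pi_i-\pi_g\le 2$, where $\pi_i-\pi_g<2$ is required when $\pi_i$ is odd. An "$r$-marked part $a$" is a part equal to $a$ with mark $r$. $N_i(\pi)$ is the number of parts with mark $i$; $\pi^{(i)}_1\ge\dots\ge\pi^{(i)}_{N_i(\pi)}$ are the parts with mark $i$, with $\pi^{(i)}_0=+\infty$, $\pi^{(i)}_{N_i(\pi)+1}=-\infty$. $\mathbb{C}(k,r)$: partitions with (i) no odd part repeated; (ii) $\pi_i\ge\pi_{i+k-1}+2$ for $1\le i\le\ell-k+1$, strict if $\pi_i$ even; (iii) at most $r-1$ parts $\le 2$. Starting types: for $\pi\in\mathbb{C}(k,r)$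 with $N_2=N_2(\pi)\ge1$, let $l$ be the largest integer in $\{0,\dots,N_2\}$ such that no odd part of $\pi$ is $\ge\pi^{(2)}_l$; for $l<i\le N_2$, $\pi^{(2)}_i$ has type $s_{-1}$. For $b=1,\dots,l$ in increasing order, type and auxiliary $\sigma_b$: for $b=1$: Case 1: 1-marked part $\pi^{(2)}_1-1$ exists and $\pi^{(2)}_1+2$ does not occur: type $s_0$, $\sigma_1=\pi^{(2)}_1-1$; Case 2: 1-marked $\pi^{(2)}_1-2$ exists and $\pi^{(2)}_1+2$ does not occur: type $s_1$, $\sigma_1=\pi^{(2)}_1-2$; Case 3: 1-marked $\pi^{(2)}_1+2$ exists: type $s_2$, $\sigma_1=\pi^{(2)}_1+2$; Case 4: 1-marked $\pi^{(2)}_1$ exists: type $s_3$, $\sigma_1=\pi^{(2)}_1$. For $2\le b\le l$: Case 1: 1-marked $\pi^{(2)}_b-1$ exists and, if a 1-marked $\pi^{(2)}_b+2$ exists, $\sigma_{b-1}=\pi^{(2)}_b+2$: type $s_0$, $\sigma_b=\pi^{(2)}_b-1$; Case 2: same with $\pi^{(2)}_b-2$: type $s_1$, $\sigma_b=\pi^{(2)}_b-2$; Case 3: 1-marked $\pi^{(2)}_b+2$ exists and $\sigma_{b-1}\ne\pi^{(2)}_b+2$: type $s_2$, $\sigma_b=\pi^{(2)}_b+2$; Case 4: 1-marked $\pi^{(2)}_b$ exists: type $s_3$, $\sigma_b=\pi^{(2)}_b$. $\mathbb{C}_{<}(k,r|p,t)$: the set of $\pi\in\mathbb{C}(k,r)$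 such that (1) no odd part is $\ge 2t+1$; (2) $\pi^{(2)}_{p+1}<2t+1<\pi^{(2)}_p$ (in particular $p\le N_2(\pi)$); (3) if $\pi^{(2)}_p=2t+2$ then it is of starting type $s_2$ or $s_3$; (4) if $\pi^{(2)}_{p+1}=2t$ then it is of starting type $s_0$ or $s_1$. The index $p_1$ in the claim is what the paper calls the first starting cluster index of $\pi$. *)

theory Defs
  imports Main "HOL-Library.Extended_Real"
begin

text \<open>Partitions are lists of positive naturals in non-increasing order,
  index 0 of the list being the largest part pi_1.\<close>

definition is_partition :: "nat list \<Rightarrow> bool" where
  "is_partition \<pi> \<longleftrightarrow> sorted_wrt (\<ge>) \<pi> \<and> (\<forall>a\<in>set \<pi>. 0 < a)"

text \<open>Goellnitz-Gordon marking: list of marks aligned with the parts.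
  The mark of the head is computed from the marks of the (smaller) tail parts.\<close>

fun gg :: "nat list \<Rightarrow> nat list" where
  "gg [] = []"
| "gg (x # xs) =
     (let ms = gg xs in
      (LEAST m::nat. 0 < m \<and>
         m \<notin> {ms ! g | g. g < length xs \<and> int x - int (xs ! g) \<le> 2 \<and>
                     (odd x \<longrightarrow> int x - int (xs ! g) < 2)}) # ms)"

definition markparts :: "nat list \<Rightarrow> nat \<Rightarrow> nat list" where
  "markparts \<pi> i = [\<pi> ! j. j \<leftarrow> [0..<length \<pi>], gg \<pi> ! j = i]"

definition Nmark :: "nat list \<Rightarrow> nat \<Rightarrow> nat" where
  "Nmark \<pi> i = length (markparts \<pi> i)"

text \<open>pi^(i)_j as an integer (meaningful for 1 <= j <= N_i).\<close>
definition mp :: "nat list \<Rightarrow> nat \<Rightarrow> nat \<Rightarrow> int" where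
  "mp \<pi> i j = int (markparts \<pi> i ! (j - 1))"

definition mpx :: "nat list \<Rightarrow> nat \<Rightarrow> nat \<Rightarrow> ereal" where
  "mpx \<pi> i j = (if j = 0 then \<infinity> else if j \<le> Nmark \<pi> i then ereal (real_of_int (mp \<pi> i j))
                 else -\<infinity>)"

definition occurs :: "nat list \<Rightarrow> int \<Rightarrow> bool" where
  "occurs \<pi> a \<longleftrightarrow> (\<exists>x\<in>set \<pi>. int x = a)"

definition marked :: "nat list \<Rightarrow> nat \<Rightarrow> int \<Rightarrow> bool" where
  "marked \<pi> r a \<longleftrightarrow> (\<exists>j<length \<pi>. int (\<pi> ! j) = a \<and> gg \<pi> ! j = r)"

definition CC :: "nat \<Rightarrow> nat \<Rightarrow> nat list \<Rightarrow> bool" where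
  "CC k r \<pi> \<longleftrightarrow> is_partition \<pi>
     \<and> (\<forall>a. odd a \<longrightarrow> count_list \<pi> a \<le> 1)
     \<and> (\<forall>i. i + k - 1 < length \<pi> \<longrightarrow>
            \<pi> ! i \<ge> \<pi> ! (i + k - 1) + 2 \<and> (even (\<pi> ! i) \<longrightarrow> \<pi> ! i > \<pi> ! (i + k - 1) + 2))
     \<and> length (filter (\<lambda>a. a \<le> 2) \<pi>) \<le> r - 1"

datatype stype = Sm1 | S0 | S1 | S2 | S3

definition lidx :: "nat list \<Rightarrow> nat" where
  "lidx \<pi> = (GREATEST l. l \<le> Nmark \<pi> 2 \<and>
       (\<forall>a\<in>set \<pi>. odd a \<longrightarrow> ereal (real a) < mpx \<pi> 2 l))"

text \<open>Type and auxiliary sigma_b for b = 1,2,... (cases tried in the order 1,2,3,4).\<close>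
fun stc :: "nat list \<Rightarrow> nat \<Rightarrow> (stype \<times> int) option" where
  "stc \<pi> 0 = None"
| "stc \<pi> (Suc b) =
     (let x = mp \<pi> 2 (Suc b); one = marked \<pi> 1 in
      if b = 0 then
        (if one (x - 1) \<and> \<not> occurs \<pi> (x + 2) then Some (S0, x - 1)
         else if one (x - 2) \<and> \<not> occurs \<pi> (x + 2) then Some (S1, x - 2)
         else if one (x + 2) then Some (S2, x + 2)
         else if one x then Some (S3, x)
         else None)
      else
        (case stc \<pi> b of None \<Rightarrow> None
         | Some (_, \<sigma>) \<Rightarrow>
            (if one (x - 1) \<and> (one (x + 2) \<longrightarrow> \<sigma> = x + 2) then Some (S0, x - 1)
             else if one (x - 2) \<and> (one (x + 2) \<longrightarrow> \<sigma> = x + 2) then Some (S1, x - 2)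
             else if one (x + 2) \<and> \<sigma> \<noteq> x + 2 then Some (S2, x + 2)
             else if one x then Some (S3, x)
             else None)))"

definition stype_of :: "nat list \<Rightarrow> nat \<Rightarrow> stype option" where
  "stype_of \<pi> b = (if 1 \<le> b \<and> b \<le> Nmark \<pi> 2 then
       (if lidx \<pi> < b then Some Sm1 else map_option fst (stc \<pi> b))
     else None)"

definition CCless :: "nat \<Rightarrow> nat \<Rightarrow> nat \<Rightarrow> nat \<Rightarrow> nat list \<Rightarrow> bool" where
  "CCless k r p t \<pi> \<longleftrightarrow> CC k r \<pi>
     \<and> (\<forall>a\<in>set \<pi>. odd a \<longrightarrow> a < 2 * t + 1)
     \<and> mpx \<pi> 2 (p + 1) < ereal (real (2 * t + 1)) \<and> ereal (real (2 * t + 1)) < mpx \<pi> 2 p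
     \<and> (mpx \<pi> 2 p = ereal (real (2 * t + 2)) \<longrightarrow> stype_of \<pi> p \<in> {Some S2, Some S3})
     \<and> (mpx \<pi> 2 (p + 1) = ereal (real (2 * t)) \<longrightarrow> stype_of \<pi> (p + 1) \<in> {Some S0, Some S1})"

end

theory Submission
  imports Defs
begin

(* Let x = pi^(2)_p1 = 2t + 2 + 4(p - p1). It is even and exceeds every odd part, and since
   it has starting type s3 it occurs both 1-marked and 2-marked. Hence no part x + 2 carries
   mark 1 or 2, and x + 1, x + 3 are not parts. If x + 4 occurred twice, one copy would carry a
   mark >= 2, and the smaller marks it has to avoid could only sit on other copies of x + 4; so
   x + 4 occurs 1-marked and 2-marked. Then x + 4 is the 2-marked part right before x, i.e.
   pi^(2)_(p1-1) = x + 4, and it is again of type s3 (a 1-marked x + 6 would clash with the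
   1-marked x + 4), contradicting the minimality of p1. *)

lemma gg_Cons_nth_Suc [simp]: "gg (x # xs) ! Suc g = gg xs ! g"
  by (simp add: Let_def)

definition gg_window :: "nat list \<Rightarrow> nat \<Rightarrow> nat \<Rightarrow> bool" where
  "gg_window xs j g \<longleftrightarrow>
     int (xs ! j) - int (xs ! g) \<le> 2 \<and> (odd (xs ! j) \<longrightarrow> int (xs ! j) - int (xs ! g) < 2)"

definition gg_blocked :: "nat list \<Rightarrow> nat \<Rightarrow> nat set" where
  "gg_blocked xs j = {gg xs ! g | g. j < g \<and> g < length xs \<and> gg_window xs j g}"

lemma Collect_nat_shift:
  "{f g | g :: nat. j < g \<and> P g} = {f (Suc g) | g. j \<le> g \<and> P (Suc g)}"
proof (intro set_eqI iffI)
  fix y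
  assume "y \<in> {f g | g. j < g \<and> P g}"
  then obtain g where "y = f g" "j < g" "P g"
    by blast
  then show "y \<in> {f (Suc g) | g. j \<le> g \<and> P (Suc g)}"
    by (cases g) auto
qed auto

lemma gg_blocked_Cons_0:
  "gg_blocked (x # xs) 0 = {gg xs ! g | g. g < length xs \<and> int x - int (xs ! g) \<le> 2 \<and>
     (odd x \<longrightarrow> int x - int (xs ! g) < 2)}"
  unfolding gg_blocked_def Collect_nat_shift by (simp add: gg_window_def del: gg.simps)

lemma gg_blocked_Cons_Suc: "gg_blocked (x # xs) (Suc j) = gg_blocked xs j"
  unfolding gg_blocked_def Collect_nat_shift[where j = "Suc j"]
  by (simp add: gg_window_def Suc_le_eq del: gg.simps)

lemma gg_nth_Least:
  "j < length xs \<Longrightarrow> gg xs ! j = (LEAST m. 0 < m \<and> m \<notin> gg_blocked xs j)"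
proof (induction xs arbitrary: j)
  case (Cons x xs)
  then show ?case
    by (cases j) (simp_all add: gg_blocked_Cons_0 gg_blocked_Cons_Suc Let_def)
qed simp

lemma gg_nth_LeastI:
  assumes "j < length xs"
  shows "0 < gg xs ! j \<and> gg xs ! j \<notin> gg_blocked xs j"
proof -
  have "finite (insert 0 (gg_blocked xs j))"
    unfolding gg_blocked_def by simp
  then have "\<exists>m. 0 < m \<and> m \<notin> gg_blocked xs j"
    using ex_new_if_finite[OF infinite_UNIV_nat] by auto
  then show ?thesis
    unfolding gg_nth_Least[OF assms] by (rule LeastI_ex)
qed

lemma gg_nth_pos: "j < length xs \<Longrightarrow> 0 < gg xs ! j"
  using gg_nth_LeastI by blast

lemma gg_nth_neq:
  "j < g \<Longrightarrow> g < length xs \<Longrightarrow> gg_window xs j g \<Longrightarrow> gg xs ! g \<noteq> gg xs ! j"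
  using gg_nth_LeastI[of j xs] unfolding gg_blocked_def by auto

lemma gg_nth_smaller_mark:
  assumes "j < length xs" "0 < m" "m < gg xs ! j"
  obtains g where "j < g" "g < length xs" "gg_window xs j g" "gg xs ! g = m"
proof -
  have "m \<in> gg_blocked xs j"
    using assms not_less_Least unfolding gg_nth_Least[OF assms(1)] by blast
  then show thesis
    using that unfolding gg_blocked_def by blast
qed

lemma partition_nth_antimono:
  "is_partition \<pi> \<Longrightarrow> i \<le> j \<Longrightarrow> j < length \<pi> \<Longrightarrow> \<pi> ! j \<le> \<pi> ! i"
  using sorted_wrt_nth_less[of "(\<ge>)" \<pi> i j] by (cases "i = j") (auto simp: is_partition_def)

lemma partition_index_less:
  "is_partition \<pi> \<Longrightarrow> i < length \<pi> \<Longrightarrow> \<pi> ! j < \<pi> ! i \<Longrightarrow> i < j"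
  using partition_nth_antimono[of \<pi> j i] by (meson leI not_le)

lemma partition_same_mark_less:
  assumes "is_partition \<pi>" "i < j" "j < length \<pi>" "gg \<pi> ! i = gg \<pi> ! j"
  shows "\<pi> ! j < \<pi> ! i"
proof -
  have "\<pi> ! j \<noteq> \<pi> ! i"
  proof
    assume "\<pi> ! j = \<pi> ! i"
    then have "gg_window \<pi> i j"
      unfolding gg_window_def by simp
    then show False
      using gg_nth_neq[OF assms(2,3)] assms(4) by simp
  qed
  moreover have "\<pi> ! j \<le> \<pi> ! i"
    using partition_nth_antimono[OF assms(1)] assms(2,3) by simp
  ultimately show ?thesis
    by simp
qed

lemma not_marked_add_2:
  assumes "is_partition \<pi>" "even v" "marked \<pi> r (int v)"
  shows "\<not> marked \<pi> r (int v + 2)"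
proof
  assume "marked \<pi> r (int v + 2)"
  then obtain j where j: "j < length \<pi>" "\<pi> ! j = v + 2" "gg \<pi> ! j = r"
    unfolding marked_def by auto
  obtain j' where j': "j' < length \<pi>" "\<pi> ! j' = v" "gg \<pi> ! j' = r"
    using assms(3) unfolding marked_def by auto
  have "j < j'"
    using partition_index_less[OF assms(1) j(1)] j(2) j'(2) by simp
  moreover have "gg_window \<pi> j j'"
    unfolding gg_window_def using j(2) j'(2) assms(2) by simp
  ultimately show False
    using gg_nth_neq j'(1) j(3) j'(3) by blast
qed

lemma count_list_gt_1_obtain:
  assumes "1 < count_list xs v"
  obtains i j where "i < j" "j < length xs" "xs ! i = v" "xs ! j = v"
proof -
  have "\<not> card {i. i < length xs \<and> xs ! i = v} \<le> Suc 0"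
    using assms by (simp add: count_list_eq_length_filter length_filter_conv_card eq_commute)
  then obtain i j where "i \<noteq> j" "i < length xs" "j < length xs" "xs ! i = v" "xs ! j = v"
    by (subst (asm) card_le_Suc0_iff_eq) auto
  then show thesis
    using that by (cases "i < j") (auto simp: not_less_iff_gr_or_eq)
qed

lemma marked_1_2_if_repeated:
  assumes "is_partition \<pi>" "1 < count_list \<pi> v"
    and below: "\<And>w m. v \<le> w + 2 \<Longrightarrow> w < v \<Longrightarrow> m \<in> {1, 2} \<Longrightarrow> \<not> marked \<pi> m (int w)"
  shows "marked \<pi> 1 (int v)" "marked \<pi> 2 (int v)"
proof -
  obtain i1 i2 where i: "i1 < i2" "i2 < length \<pi>" "\<pi> ! i1 = v" "\<pi> ! i2 = v"
    using assms(2) by (rule count_list_gt_1_obtain)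
  have "gg \<pi> ! i2 \<noteq> gg \<pi> ! i1"
    using gg_nth_neq[OF i(1,2)] i(3,4) unfolding gg_window_def by simp
  moreover have "0 < gg \<pi> ! i1" "0 < gg \<pi> ! i2"
    using gg_nth_pos i by auto
  ultimately have "2 \<le> gg \<pi> ! i1 \<or> 2 \<le> gg \<pi> ! i2"
    by linarith
  then obtain i where i': "i < length \<pi>" "\<pi> ! i = v" "2 \<le> gg \<pi> ! i"
    using i by (blast intro: less_trans)
  have lower: "marked \<pi> m (int v)" if m: "m \<in> {1, 2}" "m < gg \<pi> ! i" for m
  proof -
    have "0 < m"
      using m(1) by auto
    then obtain g where g: "i < g" "g < length \<pi>" "gg_window \<pi> i g" "gg \<pi> ! g = m"
      by (rule gg_nth_smaller_mark[OF i'(1) _ m(2)])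
    have marked_g: "marked \<pi> m (int (\<pi> ! g))"
      unfolding marked_def using g(2,4) by blast
    have "\<pi> ! g \<le> v" "v \<le> \<pi> ! g + 2"
      using partition_nth_antimono[OF assms(1)] g(1-3) i'(2) unfolding gg_window_def by auto
    then show ?thesis
      using below[OF _ _ m(1), of "\<pi> ! g"] marked_g by fastforce
  qed
  have "marked \<pi> (gg \<pi> ! i) (int v)"
    unfolding marked_def using i'(1,2) by blast
  then show "marked \<pi> 1 (int v)" "marked \<pi> 2 (int v)"
    using lower i'(3) by (auto simp: le_less)
qed

lemma markparts_conv_filter:
  "markparts \<pi> i = map ((!) \<pi>) (filter (\<lambda>j. gg \<pi> ! j = i) [0..<length \<pi>])"
proof -
  have "[f x. x \<leftarrow> xs, P x] = map f (filter P xs)" for f :: "nat \<Rightarrow> nat" and P xs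
    by (induction xs) auto
  then show ?thesis
    unfolding markparts_def .
qed

lemma in_set_markparts_iff: "v \<in> set (markparts \<pi> r) \<longleftrightarrow> marked \<pi> r (int v)"
  unfolding markparts_conv_filter marked_def by auto

lemma sorted_markparts: "is_partition \<pi> \<Longrightarrow> sorted_wrt (>) (markparts \<pi> r)"
  unfolding markparts_conv_filter sorted_wrt_map
  by (rule sorted_wrt_mono_rel[OF _ sorted_wrt_filter[OF sorted_wrt_upt]])
    (auto intro: partition_same_mark_less)

lemma sorted_wrt_greater_nth_pred:
  fixes L :: "'a :: linorder list"
  assumes "sorted_wrt (>) L" "i < length L" "v \<in> set L" "L ! i < v"
    and least: "\<And>w. w \<in> set L \<Longrightarrow> L ! i < w \<Longrightarrow> v \<le> w"
  shows "0 < i" "L ! (i - 1) = v"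
proof -
  obtain q where q: "q < length L" "L ! q = v"
    using assms(3) by (auto simp: in_set_conv_nth)
  have "q < i"
    using assms(1,2,4) q by (metis leI less_asym sorted_wrt_nth_less nat_less_le)
  then show "0 < i"
    by simp
  have "L ! i < L ! (i - 1)"
    using sorted_wrt_nth_less[OF assms(1)] \<open>0 < i\<close> assms(2) by simp
  then have "v \<le> L ! (i - 1)"
    using least assms(2) by simp
  moreover have "L ! (i - 1) \<le> L ! q"
  proof (cases "q = i - 1")
    case False
    then have "q < i - 1"
      using \<open>q < i\<close> by simp
    then show ?thesis
      using sorted_wrt_nth_less[OF assms(1)] assms(2) by fastforce
  qed simp
  ultimately show "L ! (i - 1) = v"
    using q(2) by simp
qed

lemma mp_eq_if_mpx_eq: "mpx \<pi> i j = ereal (real n) \<Longrightarrow> mp \<pi> i j = int n"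
  unfolding mpx_def by (auto split: if_splits)

lemma stc_Suc_defined: "stc \<pi> (Suc b) \<noteq> None \<Longrightarrow> b = 0 \<or> stc \<pi> b \<noteq> None"
  by (subst (asm) stc.simps(2))
    (auto simp: Let_def simp del: stc.simps split: if_splits option.splits)

lemma stc_S3_marked: "stc \<pi> (Suc b) = Some (S3, \<sigma>) \<Longrightarrow> marked \<pi> 1 (mp \<pi> 2 (Suc b))"
  by (simp add: Let_def split: if_split_asm option.split_asm prod.split_asm)

lemma stc_S3I:
  assumes "b = 0 \<or> stc \<pi> b \<noteq> None"
    and "\<not> marked \<pi> 1 (mp \<pi> 2 (Suc b) - 1)" "\<not> marked \<pi> 1 (mp \<pi> 2 (Suc b) - 2)"
    and "\<not> marked \<pi> 1 (mp \<pi> 2 (Suc b) + 2)" "marked \<pi> 1 (mp \<pi> 2 (Suc b))"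
  shows "stc \<pi> (Suc b) = Some (S3, mp \<pi> 2 (Suc b))"
proof (cases "b = 0")
  case True
  then show ?thesis
    using assms by (simp add: Let_def)
next
  case False
  then obtain s \<sigma> where "stc \<pi> b = Some (s, \<sigma>)"
    using assms(1) by auto
  then show ?thesis
    using assms False by (subst stc.simps(2)) (simp add: Let_def del: stc.simps)
qed

lemma stype_of_S3D:
  assumes "stype_of \<pi> b = Some S3"
  shows "1 \<le> b" "b \<le> Nmark \<pi> 2" "\<not> lidx \<pi> < b" "stc \<pi> b \<noteq> None"
    and "marked \<pi> 1 (mp \<pi> 2 b)"
proof -
  show b: "1 \<le> b" "b \<le> Nmark \<pi> 2" "\<not> lidx \<pi> < b"
    using assms unfolding stype_of_def by (auto split: if_splits)
  obtain \<sigma> where stc: "stc \<pi> b = Some (S3, \<sigma>)"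
    using assms b unfolding stype_of_def by (cases "stc \<pi> b") auto
  then show "stc \<pi> b \<noteq> None"
    by simp
  obtain b' where "b = Suc b'"
    using b(1) by (cases b) auto
  then show "marked \<pi> 1 (mp \<pi> 2 b)"
    using stc stc_S3_marked by blast
qed

lemma stype_of_pred_S3:
  assumes "stype_of \<pi> (Suc b) = Some S3" "1 \<le> b"
    and "\<not> marked \<pi> 1 (mp \<pi> 2 b - 1)" "\<not> marked \<pi> 1 (mp \<pi> 2 b - 2)"
    and "\<not> marked \<pi> 1 (mp \<pi> 2 b + 2)" "marked \<pi> 1 (mp \<pi> 2 b)"
  shows "stype_of \<pi> b = Some S3"
proof -
  obtain b' where b: "b = Suc b'"
    using assms(2) by (cases b) auto
  have "b' = 0 \<or> stc \<pi> b' \<noteq> None"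
    using stc_Suc_defined stype_of_S3D(4)[OF assms(1)] b by blast
  then have "stc \<pi> b = Some (S3, mp \<pi> 2 b)"
    using stc_S3I assms(3-6) b by blast
  then show ?thesis
    using stype_of_S3D(2,3)[OF assms(1)] assms(2) unfolding stype_of_def by simp
qed

lemma S3_pred_if_repeated_add_4:
  assumes part: "is_partition \<pi>" and "even x" and odd_small: "\<forall>a\<in>set \<pi>. odd a \<longrightarrow> a < x"
    and S3: "stype_of \<pi> b = Some S3" and x: "mp \<pi> 2 b = int x"
    and "1 < count_list \<pi> (x + 4)"
  shows "2 \<le> b" "mp \<pi> 2 (b - 1) = int x + 4" "stype_of \<pi> (b - 1) = Some S3"
proof -
  define L where "L = markparts \<pi> 2"
  have b: "b - 1 < length L"
    using stype_of_S3D(1,2)[OF S3] unfolding L_def Nmark_def by auto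
  have L_b: "L ! (b - 1) = x"
    using x unfolding mp_def L_def by simp
  have x_1: "marked \<pi> 1 (int x)"
    using stype_of_S3D(5)[OF S3] x by simp
  have x_2: "marked \<pi> 2 (int x)"
    using b L_b nth_mem unfolding L_def in_set_markparts_iff[symmetric] by metis
  have between_unmarked: "\<not> marked \<pi> m (int w)" if "x < w" "w < x + 4" "m \<in> {1, 2}" for m w
  proof (cases "odd w")
    case True
    then show ?thesis
      using odd_small that(1) unfolding marked_def by (auto dest: nth_mem)
  next
    case False
    then have "w = x + 2"
      using that(1,2) \<open>even x\<close> by presburger
    have "marked \<pi> m (int x)"
      using x_1 x_2 that(3) by auto
    then have "\<not> marked \<pi> m (int x + 2)"
      by (rule not_marked_add_2[OF part \<open>even x\<close>])
    then show ?thesis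
      using \<open>w = x + 2\<close> by (simp add: add.commute)
  qed
  have x4_1: "marked \<pi> 1 (int (x + 4))" and x4_2: "marked \<pi> 2 (int (x + 4))"
    using marked_1_2_if_repeated[OF part \<open>1 < count_list \<pi> (x + 4)\<close>] between_unmarked
    by auto
  have "x + 4 \<in> set L" "\<And>w. w \<in> set L \<Longrightarrow> x < w \<Longrightarrow> x + 4 \<le> w"
    using x4_2 between_unmarked[of _ 2] unfolding L_def in_set_markparts_iff by force+
  from sorted_wrt_greater_nth_pred[OF sorted_markparts[OF part] b[unfolded L_def]] this
  have "0 < b - 1" "L ! (b - 1 - 1) = x + 4"
    using L_b unfolding L_def by auto
  then show "2 \<le> b" and x4: "mp \<pi> 2 (b - 1) = int x + 4"
    unfolding mp_def L_def by auto
  show "stype_of \<pi> (b - 1) = Some S3"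
  proof (rule stype_of_pred_S3)
    show "stype_of \<pi> (Suc (b - 1)) = Some S3"
      using S3 \<open>2 \<le> b\<close> by (simp add: Suc_diff_1)
    show "\<not> marked \<pi> 1 (mp \<pi> 2 (b - 1) + 2)"
      using not_marked_add_2[OF part _ x4_1] x4 \<open>even x\<close> by simp
    show "\<not> marked \<pi> 1 (mp \<pi> 2 (b - 1) - 1)" "\<not> marked \<pi> 1 (mp \<pi> 2 (b - 1) - 2)"
      using between_unmarked[of "x + 3" 1] between_unmarked[of "x + 2" 1] x4
      by (simp_all add: ac_simps)
    show "1 \<le> b - 1"
      using \<open>2 \<le> b\<close> by simp
    show "marked \<pi> 1 (mp \<pi> 2 (b - 1))"
      using x4 x4_1 by simp
  qed
qed

theorem proposition2p7:
  fixes k r p t p1 :: nat and \<pi> :: "nat list"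
  assumes "3 \<le> r" and "r \<le> k"
    and "CCless k r p t \<pi>"
    and "mpx \<pi> 2 p = ereal (real (2 * t + 2))"
    and "stype_of \<pi> p = Some S3"
    and "1 \<le> p1" and "p1 \<le> p"
    and "mp \<pi> 2 p1 = mp \<pi> 2 p + 4 * int (p - p1)"
    and "\<forall>j\<in>{p1..p}. stype_of \<pi> j = stype_of \<pi> p"
    and "\<forall>q. 1 \<le> q \<and> q < p1 \<longrightarrow>
           \<not> (mp \<pi> 2 q = mp \<pi> 2 p + 4 * int (p - q) \<and>
              (\<forall>j\<in>{q..p}. stype_of \<pi> j = stype_of \<pi> p))"
  shows "length (filter (\<lambda>a. int a = mp \<pi> 2 p1 + 4) \<pi>) \<le> 1"
proof (rule ccontr)
  define x where "x = 2 * t + 2 + 4 * (p - p1)"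
  have "CC k r \<pi>" and odd_small: "\<forall>a\<in>set \<pi>. odd a \<longrightarrow> a < 2 * t + 1"
    using assms(3) unfolding CCless_def by blast+
  then have part: "is_partition \<pi>"
    unfolding CC_def by blast
  have odd_below_x: "\<forall>a\<in>set \<pi>. odd a \<longrightarrow> a < x"
    using odd_small by (auto simp: x_def)
  have x: "mp \<pi> 2 p1 = int x"
    using mp_eq_if_mpx_eq[OF assms(4)] assms(8) unfolding x_def by simp
  have S3: "stype_of \<pi> p1 = Some S3"
    using bspec[OF assms(9), of p1] assms(5,7) by simp
  assume "\<not> ?thesis"
  moreover have "filter (\<lambda>a. int a = mp \<pi> 2 p1 + 4) \<pi> = filter ((=) (x + 4)) \<pi>"
    unfolding x by (rule filter_cong) auto
  ultimately have "1 < count_list \<pi> (x + 4)"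
    by (simp add: count_list_eq_length_filter)
  moreover have "even x"
    by (simp add: x_def)
  ultimately have "2 \<le> p1" and pred_x: "mp \<pi> 2 (p1 - 1) = int x + 4"
    and pred_S3: "stype_of \<pi> (p1 - 1) = Some S3"
    using S3_pred_if_repeated_add_4[OF part _ odd_below_x S3 x] by blast+
  have "mp \<pi> 2 (p1 - 1) = mp \<pi> 2 p + 4 * int (p - (p1 - 1))"
    using pred_x x assms(7,8) \<open>2 \<le> p1\<close> by (simp add: of_nat_diff)
  moreover have "\<forall>j\<in>{p1 - 1..p}. stype_of \<pi> j = stype_of \<pi> p"
  proof
    fix j
    assume "j \<in> {p1 - 1..p}"
    then have "j = p1 - 1 \<or> j \<in> {p1..p}"
      by auto
    then show "stype_of \<pi> j = stype_of \<pi> p"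
      using pred_S3 assms(5,9) by (elim disjE) simp_all
  qed
  moreover have "1 \<le> p1 - 1 \<and> p1 - 1 < p1"
    using \<open>2 \<le> p1\<close> by simp
  ultimately show False
    using assms(10) by blast
qed

end
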